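(* Let $h_{m,n}(x)=S_{(n^m)}(x,\tfrac16,0,0,\ldots)$ for integers $m,n\ge0$. Then for all $m,n\ge0$, $$\big(D_x^2-3xD_x+3m\big)h_{m,n+1}\cdot h_{m,n}=0,\quad \big(D_x^2-3xD_x+3(m-n)\big)h_{m,n+1}\cdot h_{m+1,n}=0,\quad \big(D_x^2-3xD_x-3n\big)h_{m,n}\cdot h_{m+1,n}=0.$$
   Context: $(n^m)$ is the rectangular partition with $m$ parts equal to $n$. Schur functions: $S_\lambda(t)=\det(p_{\lambda_i-i+j}(t))_{1\le i,j\le l(\lambda)}$ with $\sum_{n\ge0}p_n(t)z^n=\exp(\sum_{k\ge1}t_kz^k)$, $p_n=0$ for $n<0$, $S_\emptyset=1$. Hirota operators: $D_xF\cdot G=F'G-FG'$, $D_x^2F\cdot G=F''G-2F'G'+FG''$. *)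

theory Defs
  imports "HOL-Analysis.Analysis" "HOL-Computational_Algebra.Formal_Power_Series"
    "Jordan_Normal_Form.Determinant"
begin

text \<open>Complete homogeneous-type polynomials p_n(t), defined by the generating function
  sum_n p_n(t) z^n = exp(sum_{k>=1} t_k z^k); t is the sequence of times (t 0 is unused).\<close>
definition ptimes :: "(nat \<Rightarrow> real) \<Rightarrow> nat \<Rightarrow> real" where
  "ptimes t n = fps_nth (fps_compose (fps_exp 1) (Abs_fps (\<lambda>k. if k = 0 then 0 else t k))) n"

definition pint :: "(nat \<Rightarrow> real) \<Rightarrow> int \<Rightarrow> real" where
  "pint t k = (if k < 0 then 0 else ptimes t (nat k))"

text \<open>Schur function S_lambda(t) = det(p_{lambda_i - i + j}(t)), 1 <= i,j <= l(lambda);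
  a partition is a weakly decreasing list of positive parts (indices shifted to 0-based,
  which does not change lambda_i - i + j).\<close>
definition schur :: "nat list \<Rightarrow> (nat \<Rightarrow> real) \<Rightarrow> real" where
  "schur lam t = det (mat (length lam) (length lam)
      (\<lambda>(i, j). pint t (int (lam ! i) - int i + int j)))"

definition rect :: "nat \<Rightarrow> nat \<Rightarrow> nat list" where
  "rect n m = (if n = 0 then [] else replicate m n)"

definition hmn :: "nat \<Rightarrow> nat \<Rightarrow> real \<Rightarrow> real" where
  "hmn m n x = schur (rect n m) (\<lambda>k. if k = 1 then x else if k = 2 then 1/6 else 0)"

definition hirD :: "(real \<Rightarrow> real) \<Rightarrow> (real \<Rightarrow> real) \<Rightarrow> real \<Rightarrow> real" where
  "hirD F G x = deriv F x * G x - F x * deriv G x"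

definition hirD2 :: "(real \<Rightarrow> real) \<Rightarrow> (real \<Rightarrow> real) \<Rightarrow> real \<Rightarrow> real" where
  "hirD2 F G x = deriv (deriv F) x * G x - 2 * deriv F x * deriv G x + F x * deriv (deriv G) x"

end

theory Submission
  imports Defs "Jordan_Normal_Form.Char_Poly"
begin

text \<open>At t = (x, 1/6, 0, ...) the generating function is exp(x z + z^2/6), so p_k is a
  polynomial in x with p_k' = p_(k-1) and k p_k = x p_(k-1) + p_(k-2)/3, and h_(m,n) is the minor
  of the Toeplitz matrix (p_(c-r)) on rows 0, ..., m-1 and columns n, ..., n+m-1.
  Differentiating such a minor W raises one row index by one, and by the recurrence the sum of the
  minors with one row index raised by two is 3((sum c - sum r) W - x W'). For the leading minors
  T, R of sizes k, k+1 on columns c_0, ..., c_k this turns (D_x^2 - 3x D_x + 3(k - c_k)) T.R into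
  twice a three-term Pluecker relation, an instance of the Desnanot-Jacobi identity. The three
  equations are the column choices (n, ..., n+m), (n+1, ..., n+m, n) and (n+1, ..., n+m, 0); the
  last two give h_(m+1,n) and h_(m,n) up to a column rotation and a Laplace expansion.\<close>

definition time_vec :: "real \<Rightarrow> nat \<Rightarrow> real" where
  "time_vec x = (\<lambda>k. if k = 1 then x else if k = 2 then 1/6 else 0)"

fun p_nat :: "nat \<Rightarrow> real poly" where
  "p_nat 0 = 1"
| "p_nat (Suc 0) = [:0, 1:]"
| "p_nat (Suc (Suc n)) =
     Polynomial.smult (1 / (real n + 2)) ([:0, 1:] * p_nat (Suc n) + Polynomial.smult (1/3) (p_nat n))"

definition p_poly :: "int \<Rightarrow> real poly" where
  "p_poly k = (if k < 0 then 0 else p_nat (nat k))"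

lemma ptimes_time_vec_Suc_Suc:
  "real (n + 2) * ptimes (time_vec x) (n + 2) =
     x * ptimes (time_vec x) (n + 1) + 1/3 * ptimes (time_vec x) n"
proof -
  define B :: "real fps" where "B = Abs_fps (\<lambda>k. if k = 0 then 0 else time_vec x k)"
  define E where "E = fps_compose (fps_exp 1) B"
  have "fps_deriv E = E * fps_deriv B"
    unfolding E_def by (simp add: fps_compose_deriv fps_compose_mult_distrib B_def)
  then have "fps_nth (fps_deriv E) (n + 1) = (\<Sum>i=0..n+1. fps_nth E i * fps_nth (fps_deriv B) (n + 1 - i))"
    by (simp add: fps_mult_nth)
  also have "\<dots> = (\<Sum>i\<in>{n, n+1}. fps_nth E i * fps_nth (fps_deriv B) (n + 1 - i))"
    by (rule sum.mono_neutral_right) (auto simp: B_def time_vec_def)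
  also have "\<dots> = x * fps_nth E (n + 1) + 1/3 * fps_nth E n"
    by (simp add: B_def time_vec_def)
  finally show ?thesis
    by (simp add: ptimes_def E_def B_def add.commute)
qed

lemma poly_p_nat: "poly (p_nat n) x = ptimes (time_vec x) n"
proof (induction n rule: p_nat.induct)
  case 1
  show ?case by (simp add: ptimes_def)
next
  case 2
  show ?case by (simp add: ptimes_def fps_compose_nth time_vec_def)
next
  case (3 n)
  then show ?case
    using ptimes_time_vec_Suc_Suc[of n x] by (simp add: field_simps)
qed

lemma pint_time_vec: "pint (time_vec x) k = poly (p_poly k) x"
  by (simp add: pint_def p_poly_def poly_p_nat)

lemma p_poly_rec:
  "Polynomial.smult (of_int k) (p_poly k) = [:0, 1:] * p_poly (k - 1) + Polynomial.smult (1/3) (p_poly (k - 2))"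
proof (cases "k < 2")
  case True
  then consider "k < 0" | "k = 0" | "k = 1" by linarith
  then show ?thesis by cases (auto simp: p_poly_def)
next
  case False
  then obtain n where "k = int n + 2"
    by (metis add.commute le_add_diff_inverse not_less of_nat_numeral zle_iff_zadd)
  moreover have "nat (int n + 2) = Suc (Suc n)" "nat (int n + 2 - 1) = Suc n" "nat (int n + 2 - 2) = n"
    by auto
  ultimately show ?thesis by (simp add: p_poly_def algebra_simps)
qed

lemma pderiv_p_poly: "pderiv (p_poly k) = p_poly (k - 1)"
proof (induction "nat k" arbitrary: k rule: less_induct)
  case less
  show ?case
  proof (cases "k < 2")
    case True
    then consider "k < 0" | "k = 0" | "k = 1" by linarith
    then show ?thesis by cases (auto simp: p_poly_def pderiv_pCons)
  next
    case False
    have IH: "pderiv (p_poly (k - 1)) = p_poly (k - 2)" "pderiv (p_poly (k - 2)) = p_poly (k - 3)"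
      using less[of "k - 1"] less[of "k - 2"] False by simp_all
    have "Polynomial.smult (of_int k) (pderiv (p_poly k)) =
        pderiv ([:0, 1:] * p_poly (k - 1) + Polynomial.smult (1/3) (p_poly (k - 2)))"
      by (metis pderiv_smult p_poly_rec)
    also have "\<dots> = p_poly (k - 1) + ([:0, 1:] * p_poly (k - 2) + Polynomial.smult (1/3) (p_poly (k - 3)))"
      by (simp add: pderiv_mult pderiv_add pderiv_smult IH pderiv_pCons algebra_simps)
    also have "\<dots> = Polynomial.smult (of_int k) (p_poly (k - 1))"
      using p_poly_rec[of "k - 1", symmetric] by (simp add: smult_diff_left)
    finally show ?thesis
      using False smult_cancel[of "real_of_int k"] by simp
  qed
qed

definition replace_row :: "'a mat \<Rightarrow> nat \<Rightarrow> (nat \<Rightarrow> 'a) \<Rightarrow> 'a mat" where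
  "replace_row A i v = mat (dim_row A) (dim_col A) (\<lambda>(r, j). if r = i then v j else A $$ (r, j))"

definition row_replacement_sum :: "'a::comm_ring_1 mat \<Rightarrow> (nat \<Rightarrow> nat \<Rightarrow> 'a) \<Rightarrow> 'a" where
  "row_replacement_sum A B = (\<Sum>i<dim_row A. det (replace_row A i (B i)))"

lemma det_replace_row:
  fixes A :: "'a::comm_ring_1 mat"
  assumes A: "A \<in> carrier_mat n n" and i: "i < n"
  shows "det (replace_row A i v) =
    (\<Sum>p | p permutes {0..<n}. signof p * (v (p i) * (\<Prod>l\<in>{0..<n} - {i}. A $$ (l, p l))))"
proof -
  have "replace_row A i v \<in> carrier_mat n n"
    using A by (simp add: replace_row_def)
  moreover have "(\<Prod>l = 0..<n. replace_row A i v $$ (l, p l)) =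
      v (p i) * (\<Prod>l\<in>{0..<n} - {i}. A $$ (l, p l))" if "p permutes {0..<n}" for p
  proof -
    have "p l < n" if "l < n" for l
      using \<open>p permutes {0..<n}\<close> that by (simp add: permutes_in_image)
    then show ?thesis
      using A i by (auto simp: prod.remove[of "{0..<n}" i] replace_row_def intro!: prod.cong)
  qed
  ultimately show ?thesis
    by (simp add: det_def')
qed

lemma row_replacement_sum_expand:
  fixes A :: "'a::comm_ring_1 mat"
  assumes A: "A \<in> carrier_mat n n"
  shows "row_replacement_sum A B = (\<Sum>p | p permutes {0..<n}. signof p *
      (\<Sum>i<n. B i (p i) * (\<Prod>l\<in>{0..<n} - {i}. A $$ (l, p l))))"
  using A by (simp add: row_replacement_sum_def det_replace_row sum.swap[of _ "{..<n}"] sum_distrib_left)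

lemma row_replacement_sum_linear:
  fixes A :: "'a::comm_ring_1 mat"
  assumes "A \<in> carrier_mat n n"
  shows "row_replacement_sum A (\<lambda>i j. a * B i j + b * C i j) =
    a * row_replacement_sum A B + b * row_replacement_sum A C"
  unfolding row_replacement_sum_expand[OF assms]
  by (simp add: algebra_simps sum.distrib sum_distrib_left)

lemma row_replacement_sum_weighted:
  fixes A :: "'a::comm_ring_1 mat"
  assumes A: "A \<in> carrier_mat n n"
  shows "row_replacement_sum A (\<lambda>i j. (c j - r i) * A $$ (i, j)) =
    ((\<Sum>j<n. c j) - (\<Sum>i<n. r i)) * det A"
proof -
  have "(\<Sum>i<n. (c (p i) - r i) * A $$ (i, p i) * (\<Prod>l\<in>{0..<n} - {i}. A $$ (l, p l))) =
      ((\<Sum>j<n. c j) - (\<Sum>i<n. r i)) * (\<Prod>l = 0..<n. A $$ (l, p l))"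
    if p: "p permutes {0..<n}" for p
  proof -
    have "A $$ (i, p i) * (\<Prod>l\<in>{0..<n} - {i}. A $$ (l, p l)) = (\<Prod>l = 0..<n. A $$ (l, p l))"
      if "i < n" for i
      using prod.remove[of "{0..<n}" i "\<lambda>l. A $$ (l, p l)"] that by simp
    then have "(\<Sum>i<n. (c (p i) - r i) * A $$ (i, p i) * (\<Prod>l\<in>{0..<n} - {i}. A $$ (l, p l))) =
        (\<Sum>i<n. c (p i) - r i) * (\<Prod>l = 0..<n. A $$ (l, p l))"
      by (simp add: mult.assoc sum_distrib_right)
    also have "(\<Sum>i<n. c (p i) - r i) = (\<Sum>j<n. c j) - (\<Sum>i<n. r i)"
      using sum.permute[OF p, of c] by (simp add: comp_def atLeast0LessThan sum_subtractf)
    finally show ?thesis .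
  qed
  then show ?thesis
    unfolding row_replacement_sum_expand[OF A] det_def'[OF A]
    by (simp add: sum_distrib_left mult.left_commute)
qed

lemma pderiv_sum: "pderiv (sum f S) = (\<Sum>x\<in>S. pderiv (f x))"
  by (induction S rule: infinite_finite_induct) (auto simp: pderiv_add)

lemma pderiv_det:
  fixes A :: "'a::idom poly mat"
  assumes A: "A \<in> carrier_mat n n"
  shows "pderiv (det A) = row_replacement_sum A (\<lambda>i j. pderiv (A $$ (i, j)))"
proof -
  have pderiv_of_int_mult: "pderiv (of_int k * q) = of_int k * pderiv q" for k and q :: "'a poly"
    by (simp add: pderiv_mult of_int_poly pderiv_pCons pderiv_smult)
  have "pderiv (det A) = (\<Sum>p | p permutes {0..<n}. signof p * pderiv (\<Prod>l = 0..<n. A $$ (l, p l)))"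
    unfolding det_def'[OF A] by (simp add: pderiv_sum pderiv_of_int_mult)
  then show ?thesis
    unfolding row_replacement_sum_expand[OF A] pderiv_prod
    by (simp add: atLeast0LessThan mult.commute)
qed

lemma det_2x2:
  fixes D :: "'a::comm_ring_1 mat"
  assumes D: "D \<in> carrier_mat 2 2"
  shows "det D = D $$ (0, 0) * D $$ (1, 1) - D $$ (0, 1) * D $$ (1, 0)"
proof -
  have minor: "mat_delete D i 0 \<in> carrier_mat 1 1" for i
    using mat_delete_carrier[OF D] by simp
  have "det D = D $$ (0, 0) * cofactor D 0 0 + D $$ (1, 0) * cofactor D 1 0"
    using laplace_expansion_column[OF D, of 0] by (simp add: numeral_2_eq_2)
  moreover have "cofactor D 0 0 = D $$ (1, 1)" "cofactor D 1 0 = - D $$ (0, 1)"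
    unfolding cofactor_def det_single[OF minor] using D by (simp_all add: mat_delete_def)
  ultimately show ?thesis
    by (simp add: algebra_simps)
qed

lemma det_unit_col:
  fixes A :: "'a::comm_ring_1 mat"
  assumes A: "A \<in> carrier_mat n n" and "c < n" "r < n"
    and unit: "\<And>i. i < n \<Longrightarrow> A $$ (i, c) = of_bool (i = r)"
  shows "det A = (-1) ^ (r + c) * det (mat_delete A r c)"
proof -
  have "det A = (\<Sum>i<n. A $$ (i, c) * cofactor A i c)"
    by (rule laplace_expansion_column[OF A \<open>c < n\<close>])
  also have "\<dots> = cofactor A r c"
    using \<open>r < n\<close> by (simp add: unit)
  finally show ?thesis
    by (simp add: cofactor_def)
qed

lemma det_adj_mat_corner:
  fixes M :: "'a::idom mat"
  assumes M: "M \<in> carrier_mat (n + 2) (n + 2)" and nz: "det M \<noteq> 0"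
  shows "det (mat 2 2 (\<lambda>(i, j). adj_mat M $$ (n + i, n + j))) =
    det M * det (mat n n (\<lambda>(i, j). M $$ (i, j)))"
proof -
  define adj where "adj = adj_mat M"
  have adj: "adj \<in> carrier_mat (n + 2) (n + 2)" "M * adj = det M \<cdot>\<^sub>m 1\<^sub>m (n + 2)"
    using adj_mat[OF M] by (auto simp: adj_def)
  define Q where "Q = mat (n + 2) (n + 2) (\<lambda>(i, j). if j < n then of_bool (i = j) else adj $$ (i, j))"
  define M11 where "M11 = mat n n (\<lambda>(i, j). M $$ (i, j))"
  define M21 where "M21 = mat 2 n (\<lambda>(i, j). M $$ (n + i, j))"
  define Q12 where "Q12 = mat n 2 (\<lambda>(i, j). adj $$ (i, n + j))"
  define D where "D = mat 2 2 (\<lambda>(i, j). adj $$ (n + i, n + j))"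
  have Q: "Q \<in> carrier_mat (n + 2) (n + 2)"
    by (simp add: Q_def)
  have MQ: "M * Q = four_block_mat M11 (0\<^sub>m n 2) M21 (det M \<cdot>\<^sub>m 1\<^sub>m 2)"
  proof (rule eq_matI)
    fix i j assume "i < dim_row (four_block_mat M11 (0\<^sub>m n 2) M21 (det M \<cdot>\<^sub>m 1\<^sub>m 2))"
      "j < dim_col (four_block_mat M11 (0\<^sub>m n 2) M21 (det M \<cdot>\<^sub>m 1\<^sub>m 2))"
    then have ij: "i < n + 2" "j < n + 2"
      by (auto simp: M11_def)
    have MQ_ij: "(M * Q) $$ (i, j) = row M i \<bullet> col Q j"
      using M Q ij by simp
    show "(M * Q) $$ (i, j) = four_block_mat M11 (0\<^sub>m n 2) M21 (det M \<cdot>\<^sub>m 1\<^sub>m 2) $$ (i, j)"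
    proof (cases "j < n")
      case True
      then have "col Q j = unit_vec (n + 2) j"
        by (auto simp: Q_def)
      with MQ_ij show ?thesis
        using M True ij by (simp add: four_block_mat_def M11_def M21_def)
    next
      case False
      then have "col Q j = col adj j"
        using adj ij by (auto simp: Q_def)
      with MQ_ij have "(M * Q) $$ (i, j) = (M * adj) $$ (i, j)"
        using M adj(1) ij by simp
      then show ?thesis
        using adj False ij by (auto simp: four_block_mat_def M11_def M21_def)
    qed
  qed (use M in \<open>auto simp: M11_def Q_def\<close>)
  have Q_blocks: "Q = four_block_mat (1\<^sub>m n) Q12 (0\<^sub>m 2 n) D"
    by (rule eq_matI) (auto simp: Q_def Q12_def D_def four_block_mat_def)
  have "det M * det Q = det M11 * (det M)\<^sup>2"
    unfolding det_mult[OF M Q, symmetric] MQ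
    by (subst det_four_block_mat_upper_right_zero) (auto simp: M11_def M21_def)
  moreover have "det Q = det D"
    unfolding Q_blocks by (subst det_four_block_mat_lower_left_zero) (auto simp: Q12_def D_def)
  ultimately show ?thesis
    using nz by (simp add: power2_eq_square D_def adj_def M11_def)
qed

lemma desnanot_jacobi_nonsingular:
  fixes M :: "'a::idom mat"
  assumes M: "M \<in> carrier_mat (n + 2) (n + 2)" and nz: "det M \<noteq> 0"
  shows "det M * det (mat_delete (mat_delete M (n + 1) (n + 1)) n n) =
    det (mat_delete M n n) * det (mat_delete M (n + 1) (n + 1)) -
    det (mat_delete M n (n + 1)) * det (mat_delete M (n + 1) n)"
proof -
  have adj: "adj_mat M $$ (i, j) = (-1) ^ (i + j) * det (mat_delete M j i)"
    if "i < n + 2" "j < n + 2" for i j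
    using that M by (simp add: adj_mat_def cofactor_def add.commute)
  have "det (mat 2 2 (\<lambda>(i, j). adj_mat M $$ (n + i, n + j))) =
      det (mat_delete M n n) * det (mat_delete M (n + 1) (n + 1)) -
      det (mat_delete M n (n + 1)) * det (mat_delete M (n + 1) n)"
    by (subst det_2x2) (auto simp: adj algebra_simps)
  moreover have "mat_delete (mat_delete M (n + 1) (n + 1)) n n = mat n n (\<lambda>(i, j). M $$ (i, j))"
    by (rule eq_matI) (use M in \<open>auto simp: mat_delete_def\<close>)
  ultimately show ?thesis
    using det_adj_mat_corner[OF M nz] by simp
qed

lemma map_mat_mat_delete: "map_mat f (mat_delete A i j) = mat_delete (map_mat f A) i j"
  by (rule eq_matI) (auto simp: mat_delete_def)

text \<open>The nonsingular case applied to \<open>X I + M\<close>, whose determinant is monic and hence nonzero,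
  then evaluated at \<open>X = 0\<close>.\<close>

lemma desnanot_jacobi:
  fixes M :: "'a::idom mat"
  assumes M: "M \<in> carrier_mat (n + 2) (n + 2)"
  shows "det M * det (mat_delete (mat_delete M (n + 1) (n + 1)) n n) =
    det (mat_delete M n n) * det (mat_delete M (n + 1) (n + 1)) -
    det (mat_delete M n (n + 1)) * det (mat_delete M (n + 1) n)"
proof -
  define C where "C = char_poly_matrix (- M)"
  have C: "C \<in> carrier_mat (n + 2) (n + 2)"
    using M by (simp add: C_def)
  have "det C \<noteq> 0"
    using degree_monic_char_poly[of "- M" "n + 2"] M by (auto simp: C_def char_poly_def)
  note identity = arg_cong[OF desnanot_jacobi_nonsingular[OF C this], of "\<lambda>p. poly p 0"]
  have eval0: "comm_ring_hom (\<lambda>p::'a poly. poly p 0)"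
    by unfold_locales auto
  have "map_mat (\<lambda>p. poly p 0) C = M"
    by (rule eq_matI) (use M in \<open>auto simp: C_def char_poly_matrix_def\<close>)
  then have "poly (det C) 0 = det M"
    "poly (det (mat_delete C i j)) 0 = det (mat_delete M i j)"
    "poly (det (mat_delete (mat_delete C i j) k l)) 0 = det (mat_delete (mat_delete M i j) k l)"
    for i j k l
    by (simp_all add: map_mat_mat_delete flip: comm_ring_hom.hom_det[OF eval0])
  then show ?thesis
    using identity by simp
qed

definition toeplitz_mat :: "nat \<Rightarrow> (nat \<Rightarrow> int) \<Rightarrow> (nat \<Rightarrow> int) \<Rightarrow> real poly mat" where
  "toeplitz_mat k rs cs = mat k k (\<lambda>(i, j). p_poly (cs j - rs i))"

definition toeplitz_minor :: "nat \<Rightarrow> (nat \<Rightarrow> int) \<Rightarrow> (nat \<Rightarrow> int) \<Rightarrow> real poly" where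
  "toeplitz_minor k rs cs = det (toeplitz_mat k rs cs)"

definition row_shift_sum :: "int \<Rightarrow> nat \<Rightarrow> (nat \<Rightarrow> int) \<Rightarrow> (nat \<Rightarrow> int) \<Rightarrow> real poly" where
  "row_shift_sum s k rs cs = (\<Sum>i<k. toeplitz_minor k (rs(i := rs i + s)) cs)"

lemma toeplitz_mat_carrier [simp]: "toeplitz_mat k rs cs \<in> carrier_mat k k"
  by (simp add: toeplitz_mat_def)

lemma toeplitz_minor_cong:
  "(\<And>i. i < k \<Longrightarrow> rs i = rs' i) \<Longrightarrow> (\<And>j. j < k \<Longrightarrow> cs j = cs' j) \<Longrightarrow>
    toeplitz_minor k rs cs = toeplitz_minor k rs' cs'"
  unfolding toeplitz_minor_def by (rule arg_cong[of _ _ det], rule eq_matI) (auto simp: toeplitz_mat_def)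

lemma toeplitz_minor_0: "toeplitz_minor 0 rs cs = 1"
  by (simp add: toeplitz_minor_def)

lemma toeplitz_minor_1: "toeplitz_minor 1 rs cs = p_poly (cs 0 - rs 0)"
  unfolding toeplitz_minor_def by (subst det_single) (auto simp: toeplitz_mat_def)

lemma toeplitz_minor_repeated_row:
  assumes "a < k" "b < k" "a \<noteq> b" "rs a = rs b"
  shows "toeplitz_minor k rs cs = 0"
  unfolding toeplitz_minor_def
  by (rule det_identical_rows[OF toeplitz_mat_carrier assms(3,1,2)])
    (rule eq_vecI, use assms in \<open>auto simp: toeplitz_mat_def\<close>)

lemma toeplitz_minor_swap_rows:
  assumes "a < k" "b < k" "a \<noteq> b"
  shows "toeplitz_minor k (rs(a := u, b := v)) cs = - toeplitz_minor k (rs(a := v, b := u)) cs"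
proof -
  have "toeplitz_mat k (rs(a := u, b := v)) cs = swaprows a b (toeplitz_mat k (rs(a := v, b := u)) cs)"
    by (rule eq_matI) (use assms in \<open>auto simp: toeplitz_mat_def mat_swaprows_def\<close>)
  then show ?thesis
    unfolding toeplitz_minor_def using det_swaprows[OF assms toeplitz_mat_carrier] by simp
qed

lemma row_replacement_sum_toeplitz_mat:
  "row_replacement_sum (toeplitz_mat k rs cs) (\<lambda>i j. p_poly (cs j - rs i - s)) = row_shift_sum s k rs cs"
  unfolding row_replacement_sum_def row_shift_sum_def toeplitz_minor_def
  by (intro sum.cong refl arg_cong[of _ _ det] eq_matI)
    (auto simp: replace_row_def toeplitz_mat_def algebra_simps)

lemma pderiv_toeplitz_minor: "pderiv (toeplitz_minor k rs cs) = row_shift_sum 1 k rs cs"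
proof -
  have "pderiv (toeplitz_minor k rs cs) =
      row_replacement_sum (toeplitz_mat k rs cs) (\<lambda>i j. pderiv (toeplitz_mat k rs cs $$ (i, j)))"
    unfolding toeplitz_minor_def by (rule pderiv_det[OF toeplitz_mat_carrier])
  also have "\<dots> = row_replacement_sum (toeplitz_mat k rs cs) (\<lambda>i j. p_poly (cs j - rs i - 1))"
    unfolding row_replacement_sum_def
    by (intro sum.cong refl arg_cong[of _ _ det] eq_matI)
      (auto simp: replace_row_def toeplitz_mat_def pderiv_p_poly)
  finally show ?thesis
    by (simp add: row_replacement_sum_toeplitz_mat)
qed

lemma row_shift_sum_2:
  "row_shift_sum 2 k rs cs = Polynomial.smult 3
     (of_int ((\<Sum>j<k. cs j) - (\<Sum>i<k. rs i)) * toeplitz_minor k rs cs -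
      [:0, 1:] * pderiv (toeplitz_minor k rs cs))"
proof -
  let ?A = "toeplitz_mat k rs cs"
  have rec: "(of_int (cs j) - of_int (rs i)) * p_poly (cs j - rs i) =
      [:0, 1:] * p_poly (cs j - rs i - 1) + [:1/3:] * p_poly (cs j - rs i - 2)" for i j
    using p_poly_rec[of "cs j - rs i"] by (simp add: of_int_poly)
  have "of_int ((\<Sum>j<k. cs j) - (\<Sum>i<k. rs i)) * toeplitz_minor k rs cs =
      row_replacement_sum ?A (\<lambda>i j. (of_int (cs j) - of_int (rs i)) * ?A $$ (i, j))"
    unfolding toeplitz_minor_def row_replacement_sum_weighted[OF toeplitz_mat_carrier] by simp
  also have "\<dots> = row_replacement_sum ?A
      (\<lambda>i j. [:0, 1:] * p_poly (cs j - rs i - 1) + [:1/3:] * p_poly (cs j - rs i - 2))"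
    unfolding row_replacement_sum_def
    by (intro sum.cong refl arg_cong[of _ _ det] eq_matI)
      (auto simp: replace_row_def toeplitz_mat_def rec)
  also have "\<dots> = [:0, 1:] * pderiv (toeplitz_minor k rs cs) + [:1/3:] * row_shift_sum 2 k rs cs"
    unfolding row_replacement_sum_linear[OF toeplitz_mat_carrier]
      row_replacement_sum_toeplitz_mat pderiv_toeplitz_minor ..
  finally show ?thesis
    by (simp add: algebra_simps)
qed

lemma row_shift_sum_tail:
  assumes "\<And>i. i < j \<Longrightarrow> rs (i + d) = rs i + s" "0 < d" "j + d \<le> k"
  shows "row_shift_sum s k rs cs = (\<Sum>i = j..<k. toeplitz_minor k (rs(i := rs i + s)) cs)"
proof -
  have "toeplitz_minor k (rs(i := rs i + s)) cs = 0" if "i < j" for i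
    by (rule toeplitz_minor_repeated_row[of i k "i + d"]) (use that assms in auto)
  then have "(\<Sum>i = 0..<j. toeplitz_minor k (rs(i := rs i + s)) cs) = 0"
    by simp
  moreover have "row_shift_sum s k rs cs = (\<Sum>i = 0..<j. toeplitz_minor k (rs(i := rs i + s)) cs) +
      (\<Sum>i = j..<k. toeplitz_minor k (rs(i := rs i + s)) cs)"
    unfolding row_shift_sum_def atLeast0LessThan[symmetric]
    using assms(3) by (simp add: sum.atLeastLessThan_concat)
  ultimately show ?thesis
    by simp
qed

lemma pderiv_toeplitz_minor_int:
  "pderiv (toeplitz_minor (Suc j) int cs) = toeplitz_minor (Suc j) (int(j := int j + 1)) cs"
  unfolding pderiv_toeplitz_minor by (subst row_shift_sum_tail[of j _ 1]) auto

lemma pderiv2_toeplitz_minor_int: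
  "pderiv (pderiv (toeplitz_minor (Suc (Suc j)) int cs)) =
     toeplitz_minor (Suc (Suc j)) (int(Suc j := int j + 3)) cs +
     toeplitz_minor (Suc (Suc j)) (int(j := int j + 1, Suc j := int j + 2)) cs"
proof -
  have "pderiv (toeplitz_minor (Suc (Suc j)) int cs) = toeplitz_minor (Suc (Suc j)) (int(Suc j := int j + 2)) cs"
    using pderiv_toeplitz_minor_int[of "j + 1" cs] by (simp add: ac_simps)
  then have "pderiv (pderiv (toeplitz_minor (Suc (Suc j)) int cs)) =
      row_shift_sum 1 (Suc (Suc j)) (int(Suc j := int j + 2)) cs"
    by (simp only: pderiv_toeplitz_minor)
  also have "\<dots> = toeplitz_minor (Suc (Suc j)) (int(Suc j := int j + 2, j := int j + 1)) cs +
      toeplitz_minor (Suc (Suc j)) (int(Suc j := int j + 3)) cs"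
    by (subst row_shift_sum_tail[of j _ 1]) (auto simp: add.commute)
  finally show ?thesis
    by (simp add: fun_upd_twist)
qed

lemma row_shift_sum_2_int:
  "row_shift_sum 2 (Suc (Suc j)) int cs =
     toeplitz_minor (Suc (Suc j)) (int(Suc j := int j + 3)) cs -
     toeplitz_minor (Suc (Suc j)) (int(j := int j + 1, Suc j := int j + 2)) cs"
proof -
  have "toeplitz_minor (Suc (Suc j)) (int(j := int j + 2)) cs =
      toeplitz_minor (Suc (Suc j)) (int(j := int j + 2, Suc j := int j + 1)) cs"
    by (rule toeplitz_minor_cong) auto
  also have "\<dots> = - toeplitz_minor (Suc (Suc j)) (int(j := int j + 1, Suc j := int j + 2)) cs"
    by (rule toeplitz_minor_swap_rows) auto
  finally have "toeplitz_minor (Suc (Suc j)) (int(j := int j + 2)) cs =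
      - toeplitz_minor (Suc (Suc j)) (int(j := int j + 1, Suc j := int j + 2)) cs" .
  then show ?thesis
    by (subst row_shift_sum_tail[of j _ 2]) (auto simp: add_ac)
qed

lemma pderiv2_add_row_shift_sum_2_int:
  "pderiv (pderiv (toeplitz_minor (Suc j) int cs)) + row_shift_sum 2 (Suc j) int cs =
     2 * toeplitz_minor (Suc j) (int(j := int j + 2)) cs"
proof (cases j)
  case 0
  then show ?thesis
    by (simp add: toeplitz_minor_1[unfolded One_nat_def] row_shift_sum_def pderiv_p_poly)
next
  case (Suc i)
  then show ?thesis
    using pderiv2_toeplitz_minor_int[of i cs] row_shift_sum_2_int[of i cs] by (simp add: ac_simps)
qed

lemma pderiv2_diff_row_shift_sum_2_int:
  "pderiv (pderiv (toeplitz_minor (Suc (Suc j)) int cs)) - row_shift_sum 2 (Suc (Suc j)) int cs =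
     2 * toeplitz_minor (Suc (Suc j)) (int(j := int j + 1, Suc j := int j + 2)) cs"
  unfolding pderiv2_toeplitz_minor_int row_shift_sum_2_int by simp

definition bordered_toeplitz_mat :: "nat \<Rightarrow> (nat \<Rightarrow> int) \<Rightarrow> (nat \<Rightarrow> int) \<Rightarrow> nat \<Rightarrow> real poly mat" where
  "bordered_toeplitz_mat k rs cs a =
     mat (Suc k) (Suc k) (\<lambda>(i, j). if j < k then p_poly (cs j - rs i) else of_bool (i = a))"

lemma det_bordered_toeplitz_mat:
  assumes "a \<le> k"
  shows "det (bordered_toeplitz_mat k rs cs a) =
    (-1) ^ (a + k) * toeplitz_minor k (\<lambda>i. if i < a then rs i else rs (Suc i)) cs"
proof -
  have "det (bordered_toeplitz_mat k rs cs a) =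
      (-1) ^ (a + k) * det (mat_delete (bordered_toeplitz_mat k rs cs a) a k)"
    by (rule det_unit_col) (use assms in \<open>auto simp: bordered_toeplitz_mat_def\<close>)
  also have "mat_delete (bordered_toeplitz_mat k rs cs a) a k =
      toeplitz_mat k (\<lambda>i. if i < a then rs i else rs (Suc i)) cs"
    by (rule eq_matI) (auto simp: mat_delete_def bordered_toeplitz_mat_def toeplitz_mat_def)
  finally show ?thesis
    by (simp add: toeplitz_minor_def)
qed

text \<open>Desnanot--Jacobi for the Toeplitz matrix on rows \<open>0, \<dots>, j + 2\<close> bordered by the unit
  column \<open>e\<^sub>j\<close> is the three-term Pluecker relation among the minors sharing rows
  \<open>0, \<dots>, j - 1\<close>.\<close>

lemma toeplitz_minor_pluecker:
  "toeplitz_minor (Suc j) (int(j := int j + 2)) cs * toeplitz_minor (Suc (Suc j)) int cs -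
   toeplitz_minor (Suc j) (int(j := int j + 1)) cs * toeplitz_minor (Suc (Suc j)) (int(Suc j := int j + 2)) cs +
   toeplitz_minor (Suc j) int cs * toeplitz_minor (Suc (Suc j)) (int(j := int j + 1, Suc j := int j + 2)) cs = 0"
proof -
  define N where "N = bordered_toeplitz_mat (Suc (Suc j)) int cs j"
  have N: "N \<in> carrier_mat (j + 1 + 2) (j + 1 + 2)"
    by (simp add: N_def bordered_toeplitz_mat_def)
  have "det N = toeplitz_minor (Suc (Suc j)) (int(j := int j + 1, Suc j := int j + 2)) cs"
    using det_bordered_toeplitz_mat[of j "Suc (Suc j)" int cs]
    by (auto simp: N_def intro!: toeplitz_minor_cong)
  moreover have "det (mat_delete N (j + 1) (j + 1)) = - toeplitz_minor (Suc j) (int(j := int j + 2)) cs"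
  proof -
    have "mat_delete N (j + 1) (j + 1) = bordered_toeplitz_mat (Suc j) (int(Suc j := int j + 2)) cs j"
      by (rule eq_matI)
        (auto simp: N_def mat_delete_def bordered_toeplitz_mat_def intro!: arg_cong[where f = p_poly])
    then show ?thesis
      by (auto simp: det_bordered_toeplitz_mat intro!: toeplitz_minor_cong)
  qed
  moreover have "det (mat_delete N (Suc (Suc j)) (j + 1)) = - toeplitz_minor (Suc j) (int(j := int j + 1)) cs"
  proof -
    have "mat_delete N (Suc (Suc j)) (j + 1) = bordered_toeplitz_mat (Suc j) int cs j"
      by (rule eq_matI) (auto simp: N_def mat_delete_def bordered_toeplitz_mat_def)
    then show ?thesis
      by (auto simp: det_bordered_toeplitz_mat intro!: toeplitz_minor_cong)
  qed
  moreover have "mat_delete N (j + 1) (Suc (Suc j)) = toeplitz_mat (Suc (Suc j)) (int(Suc j := int j + 2)) cs"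
    by (rule eq_matI)
      (auto simp: N_def mat_delete_def bordered_toeplitz_mat_def toeplitz_mat_def intro!: arg_cong[where f = p_poly])
  moreover have "mat_delete N (Suc (Suc j)) (Suc (Suc j)) = toeplitz_mat (Suc (Suc j)) int cs"
    by (rule eq_matI) (auto simp: N_def mat_delete_def bordered_toeplitz_mat_def toeplitz_mat_def)
  moreover have "mat_delete (toeplitz_mat (Suc (Suc j)) int cs) (j + 1) (j + 1) = toeplitz_mat (Suc j) int cs"
    by (rule eq_matI) (auto simp: mat_delete_def toeplitz_mat_def)
  ultimately show ?thesis
    using desnanot_jacobi[OF N] by (simp add: toeplitz_minor_def algebra_simps)
qed

definition hirota_poly :: "real \<Rightarrow> real poly \<Rightarrow> real poly \<Rightarrow> real poly" where
  "hirota_poly c F G =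
     pderiv (pderiv F) * G - 2 * pderiv F * pderiv G + F * pderiv (pderiv G)
     - [:0, 3:] * (pderiv F * G - F * pderiv G) + [:3 * c:] * F * G"

lemma deriv_poly: "deriv (poly p) = poly (pderiv p)"
  by (rule ext, rule DERIV_imp_deriv) (use poly_DERIV in simp)

lemma poly_hirota_poly:
  "poly (hirota_poly c F G) x =
     hirD2 (poly F) (poly G) x - 3 * x * hirD (poly F) (poly G) x + 3 * c * poly F x * poly G x"
  by (simp add: hirota_poly_def hirD2_def hirD_def deriv_poly algebra_simps)

lemma hirota_poly_smult_right:
  "hirota_poly c F (Polynomial.smult a G) = Polynomial.smult a (hirota_poly c F G)"
  by (rule poly_eq_poly_eq_iff[THEN iffD1], rule ext) (simp add: hirota_poly_def pderiv_smult algebra_simps)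

lemma hirota_poly_toeplitz_minor_Suc:
  "hirota_poly (of_int (rs k - cs k)) (toeplitz_minor k rs cs) (toeplitz_minor (Suc k) rs cs) =
     (pderiv (pderiv (toeplitz_minor k rs cs)) + row_shift_sum 2 k rs cs) * toeplitz_minor (Suc k) rs cs -
     2 * pderiv (toeplitz_minor k rs cs) * pderiv (toeplitz_minor (Suc k) rs cs) +
     toeplitz_minor k rs cs * (pderiv (pderiv (toeplitz_minor (Suc k) rs cs)) - row_shift_sum 2 (Suc k) rs cs)"
  (is "hirota_poly _ ?T ?R = _")
proof -
  define S where "S = (\<Sum>j<k. cs j) - (\<Sum>i<k. rs i)"
  have shift_T: "row_shift_sum 2 k rs cs = Polynomial.smult 3 (of_int S * ?T - [:0, 1:] * pderiv ?T)"
    unfolding row_shift_sum_2 S_def ..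
  have "(\<Sum>j<Suc k. cs j) - (\<Sum>i<Suc k. rs i) = S + cs k - rs k"
    by (simp add: S_def)
  then have shift_R: "row_shift_sum 2 (Suc k) rs cs =
      Polynomial.smult 3 (of_int (S + cs k - rs k) * ?R - [:0, 1:] * pderiv ?R)"
    by (simp only: row_shift_sum_2)
  show ?thesis
    by (rule poly_eq_poly_eq_iff[THEN iffD1], rule ext)
      (simp add: shift_T shift_R hirota_poly_def algebra_simps)
qed

lemma hirota_poly_toeplitz_minors:
  "hirota_poly (of_int (int k - cs k)) (toeplitz_minor k int cs) (toeplitz_minor (Suc k) int cs) = 0"
proof (cases k)
  case 0
  then show ?thesis
    using hirota_poly_toeplitz_minor_Suc[of int k cs]
    by (simp add: toeplitz_minor_0 toeplitz_minor_1[unfolded One_nat_def] row_shift_sum_def pderiv_p_poly)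
next
  case (Suc j)
  let ?T = "toeplitz_minor (Suc j) int cs" and ?R = "toeplitz_minor (Suc (Suc j)) int cs"
  have "pderiv ?R = toeplitz_minor (Suc (Suc j)) (int(Suc j := int j + 2)) cs"
    using pderiv_toeplitz_minor_int[of "Suc j" cs] by (simp add: ac_simps)
  then have "hirota_poly (of_int (int (Suc j) - cs (Suc j))) ?T ?R =
      2 * (toeplitz_minor (Suc j) (int(j := int j + 2)) cs * ?R -
        toeplitz_minor (Suc j) (int(j := int j + 1)) cs *
          toeplitz_minor (Suc (Suc j)) (int(Suc j := int j + 2)) cs +
        ?T * toeplitz_minor (Suc (Suc j)) (int(j := int j + 1, Suc j := int j + 2)) cs)"
    unfolding hirota_poly_toeplitz_minor_Suc pderiv2_add_row_shift_sum_2_int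
      pderiv2_diff_row_shift_sum_2_int
    unfolding pderiv_toeplitz_minor_int
    by (simp add: algebra_simps)
  then show ?thesis
    unfolding Suc by (simp only: toeplitz_minor_pluecker mult_zero_right)
qed

lemma toeplitz_minor_rotate_cols:
  assumes "\<And>j. j < m \<Longrightarrow> cs' (Suc j) = cs j" "cs' 0 = cs m"
  shows "toeplitz_minor (Suc m) rs cs' = Polynomial.smult ((-1) ^ m) (toeplitz_minor (Suc m) rs cs)"
proof -
  have "cs' j = cs (j - 1)" if "0 < j" "j \<le> m" for j
    using assms(1)[of "j - 1"] that by simp
  then have "toeplitz_mat (Suc m) rs cs' = swap_col_to_front (toeplitz_mat (Suc m) rs cs) m"
    unfolding swap_col_to_front_result[OF toeplitz_mat_carrier lessI]
    by (intro eq_matI) (auto simp: toeplitz_mat_def assms(2))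
  moreover have "(-1::real poly) ^ m * p = Polynomial.smult ((-1) ^ m) p" for p
    by (induction m) auto
  ultimately show ?thesis
    unfolding toeplitz_minor_def by (simp add: swap_col_to_front_det[OF toeplitz_mat_carrier lessI])
qed

lemma toeplitz_minor_int_first_col_zero:
  assumes "cs 0 = 0"
  shows "toeplitz_minor (Suc m) int cs = toeplitz_minor m int (\<lambda>j. cs (Suc j) - 1)"
proof -
  have "det (toeplitz_mat (Suc m) int cs) = (-1) ^ (0 + 0) * det (mat_delete (toeplitz_mat (Suc m) int cs) 0 0)"
    by (rule det_unit_col[OF toeplitz_mat_carrier]) (auto simp: toeplitz_mat_def assms p_poly_def)
  also have "mat_delete (toeplitz_mat (Suc m) int cs) 0 0 = toeplitz_mat m int (\<lambda>j. cs (Suc j) - 1)"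
    by (rule eq_matI) (auto simp: mat_delete_def toeplitz_mat_def intro!: arg_cong[where f = p_poly])
  finally show ?thesis
    by (simp add: toeplitz_minor_def)
qed

definition rect_schur_poly :: "nat \<Rightarrow> nat \<Rightarrow> real poly" where
  "rect_schur_poly m n = toeplitz_minor m int (\<lambda>j. int n + int j)"

lemma rect_schur_poly_0: "rect_schur_poly m 0 = 1"
proof -
  have "upper_triangular (toeplitz_mat m int int)"
    by (auto simp: upper_triangular_def toeplitz_mat_def p_poly_def)
  then have "det (toeplitz_mat m int int) = prod_list (diag_mat (toeplitz_mat m int int))"
    by (rule det_upper_triangular[OF _ toeplitz_mat_carrier])
  also have "\<dots> = 1"
    unfolding prod_list_diag_prod by (rule prod.neutral) (auto simp: toeplitz_mat_def p_poly_def)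
  finally show ?thesis
    by (simp add: rect_schur_poly_def toeplitz_minor_def)
qed

lemma hmn_eq_poly: "hmn m n = poly (rect_schur_poly m n)"
proof
  fix x
  show "hmn m n x = poly (rect_schur_poly m n) x"
  proof (cases "n = 0")
    case True
    then show ?thesis
      by (simp add: hmn_def rect_def schur_def rect_schur_poly_0)
  next
    case False
    have eval: "comm_ring_hom (\<lambda>p::real poly. poly p x)"
      by unfold_locales auto
    have "map_mat (\<lambda>p. poly p x) (toeplitz_mat m int (\<lambda>j. int n + int j)) =
        mat (length (rect n m)) (length (rect n m)) (\<lambda>(i, j). pint (time_vec x) (int (rect n m ! i) - int i + int j))"
      by (rule eq_matI) (auto simp: toeplitz_mat_def rect_def False pint_time_vec algebra_simps)
    then show ?thesis
      unfolding rect_schur_poly_def toeplitz_minor_def comm_ring_hom.hom_det[OF eval, symmetric]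
      by (simp add: hmn_def schur_def time_vec_def)
  qed
qed

lemma hirota_rect_schur_polys:
  fixes m n :: nat
  shows "hirota_poly (- real n) (rect_schur_poly m n) (rect_schur_poly (Suc m) n) = 0"
    "hirota_poly (real m - real n) (rect_schur_poly m (Suc n)) (rect_schur_poly (Suc m) n) = 0"
    "hirota_poly (real m) (rect_schur_poly m (Suc n)) (rect_schur_poly m n) = 0"
proof -
  show "hirota_poly (- real n) (rect_schur_poly m n) (rect_schur_poly (Suc m) n) = 0"
    using hirota_poly_toeplitz_minors[of m "\<lambda>j. int n + int j"] by (simp add: rect_schur_poly_def)
next
  define cs where "cs = (\<lambda>j. if j < m then int n + 1 + int j else int n)"
  have "rect_schur_poly m (Suc n) = toeplitz_minor m int cs"
    unfolding rect_schur_poly_def by (rule toeplitz_minor_cong) (auto simp: cs_def)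
  moreover have "rect_schur_poly (Suc m) n = Polynomial.smult ((-1) ^ m) (toeplitz_minor (Suc m) int cs)"
    unfolding rect_schur_poly_def by (rule toeplitz_minor_rotate_cols) (auto simp: cs_def)
  ultimately show "hirota_poly (real m - real n) (rect_schur_poly m (Suc n)) (rect_schur_poly (Suc m) n) = 0"
    using hirota_poly_toeplitz_minors[of m cs] by (simp add: hirota_poly_smult_right cs_def)
next
  define cs where "cs = (\<lambda>j. if j < m then int n + 1 + int j else 0)"
  have "rect_schur_poly m (Suc n) = toeplitz_minor m int cs"
    unfolding rect_schur_poly_def by (rule toeplitz_minor_cong) (auto simp: cs_def)
  moreover have "rect_schur_poly m n = toeplitz_minor (Suc m) int (\<lambda>j. if j = 0 then 0 else int n + int j)"
    unfolding rect_schur_poly_def by (subst toeplitz_minor_int_first_col_zero) simp_all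
  then have "rect_schur_poly m n = Polynomial.smult ((-1) ^ m) (toeplitz_minor (Suc m) int cs)"
    using toeplitz_minor_rotate_cols[where cs = cs and cs' = "\<lambda>j. if j = 0 then 0 else int n + int j"]
    by (simp add: cs_def)
  ultimately show "hirota_poly (real m) (rect_schur_poly m (Suc n)) (rect_schur_poly m n) = 0"
    using hirota_poly_toeplitz_minors[of m cs] by (simp add: hirota_poly_smult_right cs_def)
qed

theorem lemma5p7:
  fixes m n :: nat and x :: real
  shows "(hirD2 (hmn m (n+1)) (hmn m n) x - 3 * x * hirD (hmn m (n+1)) (hmn m n) x
           + 3 * real m * hmn m (n+1) x * hmn m n x = 0) \<and>
         (hirD2 (hmn m (n+1)) (hmn (m+1) n) x - 3 * x * hirD (hmn m (n+1)) (hmn (m+1) n) x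
           + 3 * (real m - real n) * hmn m (n+1) x * hmn (m+1) n x = 0) \<and>
         (hirD2 (hmn m n) (hmn (m+1) n) x - 3 * x * hirD (hmn m n) (hmn (m+1) n) x
           - 3 * real n * hmn m n x * hmn (m+1) n x = 0)"
  using hirota_rect_schur_polys[where m = m and n = n, THEN arg_cong[where f = "\<lambda>p. poly p x"]]
  unfolding hmn_eq_poly by (simp add: poly_hirota_poly)

end
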